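(* Assume (A1)–(A3) and $m_1<0$. Then $V_1=\sum_{i\ge0}\pi_1(i)\mathbb E_{(i,0)}(Y_1(1))$ is well defined, and for every $(k,\ell)\in\mathbb N\times\mathbb Z$ the random variable $Y_1(T_1(k))$ is $\mathbb P_{(k,\ell)}$-integrable with \[\mathbb E_{(k,\ell)}\bigl(Y_1(T_1(k))\bigr)=\ell+\frac{V_1}{\pi_1(k)},\] where $T_1(k)=\inf\{n>0: X_1(n)=k\}$.
   Context: Let $\mathbb N=\{0,1,2,\dots\}$ and fix an integer $k_0\ge1$. Let $\mu$, $\mu'_j$ ($0\le j<k_0$), $\mu''_i$ ($0\le i<k_0$), $\mu_{ij}$ ($0\le i,j<k_0$) be probability measures on $\mathbb Z^2$. The random walk $Z=(X(n),Y(n))$ on $\mathbb N^2$ has transition probabilities $p((i,j)\to(i',j'))$ equal to $\mu(i'-i,j'-j)$ if $i,j\ge k_0$; $\mu'_j(i'-i,j'-j)$ if $i\ge k_0$, $0\le j<k_0$; $\mu''_i(i'-i,j'-j)$ if $0\le i<k_0$, $j\ge k_0$; $\mu_{ij}(i'-i,j'-j)$ if $0\le i,j<k_0$. Assumptions: (A1) $\mu(a,b)=0$ if $a<-k_0$ or $b<-k_0$; $\mu'_j(a,b)=0$ if $a<-k_0$ or $b<-j$; $\mu''_i(a,b)=0$ if $b<-k_0$ or $a<-i$; $\mu_{ij}(a,b)=0$ if $a<-i$ or $b<-j$. (A2) There are $\delta,\gamma,C>0$ with $\sup_{(i,j)\in\mathbb N^2}\mathbb E_{(i,j)}[\exp(\delta(X(1)-i)+\gamma(Y(1)-j))]\le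 C$. (A3) $Z_0,Z_1,Z_2,Z$ are irreducible on their state spaces. $Z_0$: random walk on $\mathbb Z^2$ with increment law $\mu$; $m_1=\sum a\mu(a,b)$. $Z_1=(X_1,Y_1)$: Markov chain on $\mathbb N\times\mathbb Z$ with transitions $\mu(i'-i,j'-j)$ from $(i,j)$ if $i\ge k_0$ and $\mu''_i(i'-i,j'-j)$ if $0\le i<k_0$; $\mathbb P_{(k,\ell)},\mathbb E_{(k,\ell)}$ refer to it started at $(k,\ell)$. $Z_2$: Markov chain on $\mathbb Z\times\mathbb N$ with transitions $\mu$ if $j\ge k_0$ and $\mu'_j$ if $0\le j<k_0$. The first coordinate $X_1$ is a Markov chain on $\mathbb N$; when $m_1<0$ it is positive recurrent with invariant distribution $\pi_1$. *)

theory Defs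
  imports "HOL-Probability.Probability"
begin

type_synonym state = "int \<times> int"

text \<open>Transition kernels: the law of the increment from a given state.\<close>

definition K0 :: "(int \<times> int) pmf \<Rightarrow> state \<Rightarrow> (int \<times> int) pmf" where
  "K0 \<mu> s = \<mu>"

definition K1 :: "nat \<Rightarrow> (int \<times> int) pmf \<Rightarrow> (nat \<Rightarrow> (int \<times> int) pmf)
                  \<Rightarrow> state \<Rightarrow> (int \<times> int) pmf" where
  "K1 k0 \<mu> \<mu>'' s = (if fst s \<ge> int k0 then \<mu> else \<mu>'' (nat (fst s)))"

definition K2 :: "nat \<Rightarrow> (int \<times> int) pmf \<Rightarrow> (nat \<Rightarrow> (int \<times> int) pmf)
                  \<Rightarrow> state \<Rightarrow> (int \<times> int) pmf" where
  "K2 k0 \<mu> \<mu>' s = (if snd s \<ge> int k0 then \<mu> else \<mu>' (nat (snd s)))"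

definition KZ :: "nat \<Rightarrow> (int \<times> int) pmf \<Rightarrow> (nat \<Rightarrow> (int \<times> int) pmf)
                  \<Rightarrow> (nat \<Rightarrow> (int \<times> int) pmf) \<Rightarrow> (nat \<Rightarrow> nat \<Rightarrow> (int \<times> int) pmf)
                  \<Rightarrow> state \<Rightarrow> (int \<times> int) pmf" where
  "KZ k0 \<mu> \<mu>' \<mu>'' \<mu>ij s =
     (if fst s \<ge> int k0 \<and> snd s \<ge> int k0 then \<mu>
      else if fst s \<ge> int k0 then \<mu>' (nat (snd s))
      else if snd s \<ge> int k0 then \<mu>'' (nat (fst s))
      else \<mu>ij (nat (fst s)) (nat (snd s)))"

definition step :: "(state \<Rightarrow> (int \<times> int) pmf) \<Rightarrow> state \<Rightarrow> state \<Rightarrow> real" where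
  "step K s t = pmf (K s) (fst t - fst s, snd t - snd s)"

definition one_step :: "(state \<Rightarrow> (int \<times> int) pmf) \<Rightarrow> state \<Rightarrow> state pmf" where
  "one_step K s = map_pmf (\<lambda>d. (fst s + fst d, snd s + snd d)) (K s)"

definition irreducible_on :: "(state \<Rightarrow> state \<Rightarrow> real) \<Rightarrow> state set \<Rightarrow> bool" where
  "irreducible_on p S \<longleftrightarrow> (\<forall>s\<in>S. \<forall>t\<in>S. (s, t) \<in> {(x, y). p x y > 0}\<^sup>*)"

definition markov_process ::
  "'w measure \<Rightarrow> (nat \<Rightarrow> 'w \<Rightarrow> state) \<Rightarrow> (state \<Rightarrow> (int \<times> int) pmf) \<Rightarrow> state \<Rightarrow> bool" where
  "markov_process M Z K s0 \<longleftrightarrow>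
     prob_space M \<and>
     (\<forall>n. Z n \<in> measurable M (count_space UNIV)) \<and>
     (\<forall>n xs. measure M {\<omega> \<in> space M. \<forall>i\<le>n. Z i \<omega> = xs i} =
        (if xs 0 = s0 then (\<Prod>i<n. step K (xs i) (xs (Suc i))) else 0))"

definition pX1 :: "nat \<Rightarrow> (int \<times> int) pmf \<Rightarrow> (nat \<Rightarrow> (int \<times> int) pmf) \<Rightarrow> nat \<Rightarrow> nat \<Rightarrow> real" where
  "pX1 k0 \<mu> \<mu>'' i i' = measure_pmf.prob (K1 k0 \<mu> \<mu>'' (int i, 0)) {d. fst d = int i' - int i}"

definition T1 :: "(nat \<Rightarrow> 'w \<Rightarrow> state) \<Rightarrow> nat \<Rightarrow> 'w \<Rightarrow> nat" where
  "T1 Z k \<omega> = (LEAST n. n > 0 \<and> fst (Z n \<omega>) = int k)"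

end

(*
  Write T for the return time T1(k) and D(n) = Y1(n + 1) - Y1(n).  Then
  Y1(T) - l = sum_{n < T} D(n), and the law of D(n) given the past depends only on X1(n).
  Conditioning step by step therefore gives
    E (Y1(T) - l) = sum_j E[number of n < T with X1(n) = j] * E_(j,0) Y1(1),
  and by the cycle formula for the positive recurrent chain X1 the expected number of visits
  to j during an excursion from k is pi1(j) / pi1(k); this yields V1 / pi1(k).  With D
  replaced by 1 the same computation is Kac's formula E T = 1 / pi1(k), so T is finite
  almost surely.  The interchanges of sums are justified by running the argument separately
  for the positive and the negative parts of D, whose means are bounded uniformly in the
  starting point by (A1) and (A2).
*)

theory Submission
  imports Defs
begin

lemma nn_integral_countable_rv:
  fixes V :: "'w \<Rightarrow> 'a::countable" and H :: "'a \<Rightarrow> ennreal"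
  assumes [measurable]: "V \<in> measurable M (count_space UNIV)"
  shows "(\<integral>\<^sup>+\<omega>. H (V \<omega>) \<partial>M) = (\<integral>\<^sup>+v. H v * emeasure M {\<omega>\<in>space M. V \<omega> = v} \<partial>count_space UNIV)"
proof -
  have "(\<integral>\<^sup>+\<omega>. H (V \<omega>) \<partial>M) = (\<integral>\<^sup>+\<omega>. \<integral>\<^sup>+v. H v * indicator {\<omega>\<in>space M. V \<omega> = v} \<omega> \<partial>count_space UNIV \<partial>M)"
  proof (rule nn_integral_cong)
    fix \<omega> assume "\<omega> \<in> space M"
    then have "(\<integral>\<^sup>+v. H v * indicator {\<omega>\<in>space M. V \<omega> = v} \<omega> \<partial>count_space UNIV)
        = (\<integral>\<^sup>+v. H v * indicator {V \<omega>} v \<partial>count_space UNIV)"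
      by (intro nn_integral_cong) (auto split: split_indicator)
    then show "H (V \<omega>) = (\<integral>\<^sup>+v. H v * indicator {\<omega>\<in>space M. V \<omega> = v} \<omega> \<partial>count_space UNIV)"
      by simp
  qed
  also have "\<dots> = (\<integral>\<^sup>+v. \<integral>\<^sup>+\<omega>. H v * indicator {\<omega>\<in>space M. V \<omega> = v} \<omega> \<partial>M \<partial>count_space UNIV)"
    by (rule nn_integral_count_space_nn_integral) auto
  also have "\<dots> = (\<integral>\<^sup>+v. H v * emeasure M {\<omega>\<in>space M. V \<omega> = v} \<partial>count_space UNIV)"
    by (intro nn_integral_cong nn_integral_cmult_indicator) auto
  finally show ?thesis .
qed

lemma nn_integral_count_space_swap:
  fixes f :: "'a \<Rightarrow> 'b \<Rightarrow> ennreal"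
  shows "(\<integral>\<^sup>+x. \<integral>\<^sup>+y. f x y \<partial>count_space UNIV \<partial>count_space UNIV) =
         (\<integral>\<^sup>+y. \<integral>\<^sup>+x. f x y \<partial>count_space UNIV \<partial>count_space UNIV)"
  using nn_integral_fst_count_space[of "case_prod f"] nn_integral_snd_count_space[of "case_prod f"]
  by simp

lemma ennreal_suminf_Suc: "(\<Sum>n. f n) = f 0 + (\<Sum>n. f (Suc n))" for f :: "nat \<Rightarrow> ennreal"
  using suminf_offset[of f 1] by (simp add: add.commute)

lemma ennreal_tendsto_0_of_suminf_finite:
  fixes f :: "nat \<Rightarrow> ennreal"
  assumes "(\<Sum>n. f n) < \<infinity>"
  shows "f \<longlonglongrightarrow> 0"
proof -
  have fin: "f n = ennreal (enn2real (f n))" for n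
    using sum_le_suminf[of f "{n}"] assms by (simp add: ennreal_enn2real_if order_le_less_trans)
  then have "summable (\<lambda>n. enn2real (f n))"
    using assms by (intro summable_suminf_not_top) (auto simp flip: fin)
  then have "(\<lambda>n. ennreal (enn2real (f n))) \<longlonglongrightarrow> ennreal 0"
    by (intro tendsto_ennrealI summable_LIMSEQ_zero)
  then show ?thesis
    by (simp flip: fin)
qed

lemma summable_pmf_nat: "summable (\<lambda>n. pmf p n)" for p :: "nat pmf"
proof -
  have "(\<Sum>n. ennreal (pmf p n)) = 1"
    by (simp add: nn_integral_count_space_nat[symmetric] nn_integral_pmf)
  then show ?thesis
    by (intro summable_suminf_not_top) auto
qed

lemma summable_pmf_nat_mult_bounded:
  fixes p :: "nat pmf"
  assumes "\<And>n. \<bar>f n\<bar> \<le> B"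
  shows "summable (\<lambda>n. pmf p n * f n)"
  by (rule summable_comparison_test'[OF summable_mult2[OF summable_pmf_nat[of p], of B], of 0])
    (simp add: abs_mult mult_left_mono assms)

lemma enn2real_ennreal_minus_neg: "enn2real (ennreal x) - enn2real (ennreal (- x)) = x"
  by (cases "x \<ge> 0") (simp_all add: ennreal_neg)

lemma ennreal_mult_eq_imp_eq_divide:
  assumes "ennreal a * x = ennreal b" "0 < a"
  shows "x = ennreal (b / a)"
proof -
  have "x = ennreal (1 / a) * (ennreal a * x)"
    using assms(2) by (simp add: mult.assoc[symmetric] ennreal_mult[symmetric])
  also have "\<dots> = ennreal (b / a)"
    using assms by (simp add: ennreal_mult'[symmetric])
  finally show ?thesis .
qed

section \<open>The cycle formula for a stationary kernel\<close>

locale stationary_kernel =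
  fixes P :: "'a \<Rightarrow> 'a pmf" and \<pi> :: "'a pmf" and a :: 'a
  assumes stationary: "bind_pmf \<pi> P = \<pi>"
    and reaches_ref: "\<And>j. j \<in> set_pmf \<pi> \<Longrightarrow> (j, a) \<in> {(x, y). y \<in> set_pmf (P x)}\<^sup>*"
begin

abbreviation p :: "'a \<Rightarrow> 'a \<Rightarrow> ennreal" where
  "p i j \<equiv> ennreal (pmf (P i) j)"

lemma nn_integral_p: "(\<integral>\<^sup>+j. p i j \<partial>count_space UNIV) = 1"
  by (simp add: nn_integral_pmf)

lemma stationary_nn_integral: "ennreal (pmf \<pi> j) = (\<integral>\<^sup>+i. pmf \<pi> i * p i j \<partial>count_space UNIV)"
proof -
  have "ennreal (pmf (bind_pmf \<pi> P) j) = (\<integral>\<^sup>+i. pmf \<pi> i * p i j \<partial>count_space UNIV)"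
    by (simp add: ennreal_pmf_bind nn_integral_measure_pmf)
  then show ?thesis
    by (simp add: stationary)
qed

lemma pmf_ref_pos: "pmf \<pi> a > 0"
proof -
  obtain j where "j \<in> set_pmf \<pi>"
    using set_pmf_not_empty[of \<pi>] by blast
  from reaches_ref[OF this] this have "a \<in> set_pmf \<pi>"
  proof (induction rule: rtrancl_induct)
    case (step x y)
    then have "y \<in> set_pmf (bind_pmf \<pi> P)"
      by auto
    then show ?case
      by (simp add: stationary)
  qed
  then show ?thesis
    by (simp add: pmf_positive)
qed

text \<open>For the chain with kernel \<open>P\<close>, \<^term>\<open>taboo n j\<close> is the probability, starting from \<open>a\<close>,
  of being at \<open>j\<close> at time \<open>n\<close> without visiting \<open>a\<close> at the times \<open>1, \<dots>, n\<close>; and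
  \<^term>\<open>avoiding n j\<close> is the probability, starting from \<open>\<pi>\<close>, of being at \<open>j\<close> at time \<open>n\<close>
  without visiting \<open>a\<close> at the times \<open>0, \<dots>, n - 1\<close>.\<close>

fun taboo :: "nat \<Rightarrow> 'a \<Rightarrow> ennreal" where
  "taboo 0 j = indicator {a} j"
| "taboo (Suc n) j = (if j = a then 0 else \<integral>\<^sup>+i. p i j * taboo n i \<partial>count_space UNIV)"

fun avoiding :: "nat \<Rightarrow> 'a \<Rightarrow> ennreal" where
  "avoiding 0 j = pmf \<pi> j"
| "avoiding (Suc n) j = (\<integral>\<^sup>+i. indicator (- {a}) i * avoiding n i * p i j \<partial>count_space UNIV)"

declare avoiding.simps(2) [simp del]

lemma taboo_Suc_indicator:
  "taboo (Suc n) j = indicator (- {a}) j * (\<integral>\<^sup>+i. p i j * taboo n i \<partial>count_space UNIV)"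
  by (simp split: split_indicator)

text \<open>By stationarity, \<^term>\<open>avoiding n j\<close> is also the probability of being at \<open>j\<close> at time
  \<open>n + 1\<close> without visiting \<open>a\<close> at the times \<open>1, \<dots>, n\<close>; the identity splits this event
  according to whether the chain starts at \<open>a\<close>.\<close>

lemma avoiding_decompose:
  "pmf \<pi> a * (\<integral>\<^sup>+i. p i j * taboo n i \<partial>count_space UNIV) + avoiding (Suc n) j = avoiding n j"
proof (induction n arbitrary: j)
  case 0
  have "avoiding 0 j = (\<integral>\<^sup>+i. pmf \<pi> i * p i j \<partial>count_space UNIV)"
    by (simp only: avoiding.simps(1)) (rule stationary_nn_integral)
  also have "\<dots> = (\<integral>\<^sup>+i. pmf \<pi> i * p i j * indicator {a} i +
      indicator (- {a}) i * avoiding 0 i * p i j \<partial>count_space UNIV)"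
    by (intro nn_integral_cong) (auto split: split_indicator)
  also have "\<dots> = (\<integral>\<^sup>+i. pmf \<pi> i * p i j * indicator {a} i \<partial>count_space UNIV) + avoiding (Suc 0) j"
    by (simp only: avoiding.simps(2) nn_integral_add[OF borel_measurable_count_space borel_measurable_count_space])
  also have "(\<integral>\<^sup>+i. pmf \<pi> i * p i j * indicator {a} i \<partial>count_space UNIV) =
      pmf \<pi> a * (\<integral>\<^sup>+i. p i j * taboo 0 i \<partial>count_space UNIV)"
    by simp
  finally show ?case ..
next
  case (Suc n)
  have "pmf \<pi> a * (\<integral>\<^sup>+i. p i j * taboo (Suc n) i \<partial>count_space UNIV) + avoiding (Suc (Suc n)) j =
      (\<integral>\<^sup>+i. pmf \<pi> a * (p i j * taboo (Suc n) i) \<partial>count_space UNIV) +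
      (\<integral>\<^sup>+i. indicator (- {a}) i * avoiding (Suc n) i * p i j \<partial>count_space UNIV)"
    by (simp add: nn_integral_cmult avoiding.simps(2) del: taboo.simps)
  also have "\<dots> = (\<integral>\<^sup>+i. indicator (- {a}) i *
      (pmf \<pi> a * (\<integral>\<^sup>+k. p k i * taboo n k \<partial>count_space UNIV) + avoiding (Suc n) i) * p i j \<partial>count_space UNIV)"
    by (subst nn_integral_add[symmetric])
      (auto intro!: nn_integral_cong simp: taboo_Suc_indicator algebra_simps simp del: taboo.simps)
  also have "\<dots> = avoiding (Suc n) j"
    by (simp only: Suc.IH) (simp only: avoiding.simps(2))
  finally show ?case .
qed

lemma avoiding_le: "avoiding n j \<le> pmf \<pi> j"
proof (induction n)
  case (Suc n)
  have "avoiding (Suc n) j \<le> avoiding n j"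
    using avoiding_decompose[of j n] by (metis add.commute le_iff_add)
  with Suc show ?case
    by order
qed simp

lemma taboo_partial_sum:
  assumes "j \<noteq> a"
  shows "pmf \<pi> a * (\<Sum>n<N. taboo (Suc n) j) + avoiding N j = pmf \<pi> j"
proof (induction N)
  case (Suc N)
  have "pmf \<pi> a * (\<Sum>n<Suc N. taboo (Suc n) j) + avoiding (Suc N) j =
      pmf \<pi> a * (\<Sum>n<N. taboo (Suc n) j) +
      (pmf \<pi> a * (\<integral>\<^sup>+i. p i j * taboo N i \<partial>count_space UNIV) + avoiding (Suc N) j)"
    using assms by (simp add: distrib_left add_ac)
  also have "\<dots> = pmf \<pi> j"
    by (simp only: avoiding_decompose Suc.IH)
  finally show ?case .
qed simp

definition avoiding_mass :: "nat \<Rightarrow> ennreal" where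
  "avoiding_mass n = (\<integral>\<^sup>+j. indicator (- {a}) j * avoiding n j \<partial>count_space UNIV)"

lemma avoiding_mass_Suc: "avoiding_mass n = avoiding (Suc n) a + avoiding_mass (Suc n)"
proof -
  have "(\<integral>\<^sup>+j. avoiding (Suc n) j \<partial>count_space UNIV) =
      (\<integral>\<^sup>+i. \<integral>\<^sup>+j. indicator (- {a}) i * avoiding n i * p i j \<partial>count_space UNIV \<partial>count_space UNIV)"
    by (simp only: avoiding.simps(2)) (rule nn_integral_count_space_swap)
  also have "\<dots> = avoiding_mass n"
    by (simp add: avoiding_mass_def nn_integral_cmult nn_integral_p)
  finally have "avoiding_mass n = (\<integral>\<^sup>+j. avoiding (Suc n) j \<partial>count_space UNIV)" ..
  also have "\<dots> = (\<integral>\<^sup>+j. avoiding (Suc n) a * indicator {a} j +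
      indicator (- {a}) j * avoiding (Suc n) j \<partial>count_space UNIV)"
    by (intro nn_integral_cong) (auto split: split_indicator)
  also have "\<dots> = avoiding (Suc n) a + avoiding_mass (Suc n)"
    by (subst nn_integral_add) (auto simp: avoiding_mass_def)
  finally show ?thesis .
qed

lemma suminf_avoiding_ref_le_1: "(\<Sum>N. avoiding (Suc N) a) \<le> 1"
proof -
  have "(\<Sum>N<n. avoiding (Suc N) a) + avoiding_mass n = avoiding_mass 0" for n
  proof (induction n)
    case (Suc n)
    have "(\<Sum>N<Suc n. avoiding (Suc N) a) + avoiding_mass (Suc n) =
        (\<Sum>N<n. avoiding (Suc N) a) + (avoiding (Suc n) a + avoiding_mass (Suc n))"
      by (simp add: add_ac)
    also have "\<dots> = avoiding_mass 0"
      using Suc.IH by (simp only: avoiding_mass_Suc[of n, symmetric])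
    finally show ?case .
  qed simp
  then have partial: "(\<Sum>N<n. avoiding (Suc N) a) \<le> avoiding_mass 0" for n
    by (metis le_iff_add)
  have "avoiding_mass 0 \<le> (\<integral>\<^sup>+j. pmf \<pi> j \<partial>count_space UNIV)"
    unfolding avoiding_mass_def by (intro nn_integral_mono) (simp split: split_indicator)
  then have "avoiding_mass 0 \<le> 1"
    by (simp add: nn_integral_pmf)
  then show ?thesis
    by (intro suminf_le_const[OF summableI] order_trans[OF partial])
qed

lemma suminf_avoiding_finite:
  assumes "(j, a) \<in> {(x, y). y \<in> set_pmf (P x)}\<^sup>*"
  shows "(\<Sum>N. avoiding (Suc N) j) < \<infinity>"
  using assms
proof (induction rule: converse_rtrancl_induct)
  case base
  then show ?case
    using suminf_avoiding_ref_le_1 by (simp add: order_le_less_trans)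
next
  case (step j j')
  show ?case
  proof (cases "j = a")
    case True
    then show ?thesis
      using suminf_avoiding_ref_le_1 by (simp add: order_le_less_trans)
  next
    case False
    have "avoiding (Suc N) j * p j j' \<le> avoiding (Suc (Suc N)) j'" for N
      using nn_integral_ge_point[of j UNIV "\<lambda>i. indicator (- {a}) i * avoiding (Suc N) i * p i j'"] False
      by (simp only: avoiding.simps(2)) simp
    then have "(\<Sum>N. avoiding (Suc N) j) * p j j' \<le> (\<Sum>N. avoiding (Suc (Suc N)) j')"
      unfolding ennreal_suminf_multc[symmetric] by (intro suminf_le) auto
    also have "\<dots> \<le> (\<Sum>N. avoiding (Suc N) j')"
      using ennreal_suminf_Suc[of "\<lambda>N. avoiding (Suc N) j'"] by (simp)
    also have "\<dots> < \<infinity>"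
      by (rule step.IH)
    finally have "(\<Sum>N. avoiding (Suc N) j) * p j j' < \<infinity>" .
    moreover have "p j j' > 0"
      using step.hyps(1) by (simp add: pmf_positive)
    ultimately show ?thesis
      by (auto simp: ennreal_mult_less_top top.not_eq_extremum)
  qed
qed

lemma avoiding_tendsto_0: "(\<lambda>N. avoiding N j) \<longlonglongrightarrow> 0"
proof (cases "j \<in> set_pmf \<pi>")
  case True
  have "(\<lambda>N. avoiding (Suc N) j) \<longlonglongrightarrow> 0"
    by (intro ennreal_tendsto_0_of_suminf_finite suminf_avoiding_finite reaches_ref True)
  then show ?thesis
    by (rule LIMSEQ_imp_Suc)
next
  case False
  then have "avoiding N j = 0" for N
    using avoiding_le[of N j] by (simp add: set_pmf_iff)
  then show ?thesis
    by simp
qed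

theorem cycle_formula: "pmf \<pi> a * (\<Sum>n. taboo n j) = pmf \<pi> j"
proof (cases "j = a")
  case True
  then show ?thesis
    by (subst ennreal_suminf_Suc) simp
next
  case False
  have "(\<lambda>N. pmf \<pi> a * (\<Sum>n<N. taboo (Suc n) j) + avoiding N j) \<longlonglongrightarrow>
      pmf \<pi> a * (\<Sum>n. taboo (Suc n) j) + 0"
    by (intro tendsto_add ennreal_tendsto_cmult summable_LIMSEQ avoiding_tendsto_0) auto
  then have "pmf \<pi> a * (\<Sum>n. taboo (Suc n) j) = pmf \<pi> j"
    by (simp add: taboo_partial_sum[OF False] LIMSEQ_const_iff del: taboo.simps)
  with False show ?thesis
    by (subst ennreal_suminf_Suc) simp
qed

end

section \<open>Paths of a Markov chain on \<open>\<int> \<times> \<int>\<close>\<close>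

lemma step_eq_pmf_one_step: "step K s t = pmf (one_step K s) t"
proof -
  have "inj (\<lambda>d::int \<times> int. (fst s + fst d, snd s + snd d))"
    by (auto simp: inj_def prod_eq_iff)
  from pmf_map_inj'[OF this, of "K s" "(fst t - fst s, snd t - snd s)"] show ?thesis
    by (simp add: step_def one_step_def)
qed

locale markov_path =
  fixes M :: "'w measure" and Z :: "nat \<Rightarrow> 'w \<Rightarrow> state"
    and K :: "state \<Rightarrow> (int \<times> int) pmf" and s0 :: state
  assumes markov: "markov_process M Z K s0"
begin

sublocale prob_space M
  using markov by (simp add: markov_process_def)

lemma measurable_Z[measurable]: "Z n \<in> measurable M (count_space UNIV)"
  using markov by (simp add: markov_process_def)

lemma measure_Z_upto:
  "measure M {\<omega>\<in>space M. \<forall>i\<le>n. Z i \<omega> = xs i} =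
     (if xs 0 = s0 then \<Prod>i<n. step K (xs i) (xs (Suc i)) else 0)"
  using markov unfolding markov_process_def by blast

lemma AE_Z_0: "AE \<omega> in M. Z 0 \<omega> = s0"
proof -
  have "prob {\<omega>\<in>space M. \<forall>i\<le>0. Z i \<omega> = s0} = 1"
    using measure_Z_upto[of 0 "\<lambda>_. s0"] by simp
  from AE_prob_1[OF this] show ?thesis
    by eventually_elim simp
qed

definition path :: "nat \<Rightarrow> 'w \<Rightarrow> state list" where
  "path n \<omega> = map (\<lambda>j. Z j \<omega>) [0..<Suc n]"

lemma path_eq_iff: "path n \<omega> = xs \<longleftrightarrow> length xs = Suc n \<and> (\<forall>i\<le>n. Z i \<omega> = xs ! i)"
  unfolding path_def by (auto simp: list_eq_iff_nth_eq less_Suc_eq_le simp del: upt_Suc)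

lemma path_Suc: "path (Suc n) \<omega> = path n \<omega> @ [Z (Suc n) \<omega>]"
  unfolding path_def by simp

lemma length_path[simp]: "length (path n \<omega>) = Suc n"
  unfolding path_def by simp

lemma last_path: "last (path n \<omega>) = Z n \<omega>"
  unfolding path_def by simp

lemma nth_path: "m \<le> n \<Longrightarrow> path n \<omega> ! m = Z m \<omega>"
  unfolding path_def by (simp add: nth_map less_Suc_eq_le del: upt_Suc)

lemma measurable_path[measurable]: "path n \<in> measurable M (count_space UNIV)"
proof (subst measurable_count_space_eq2_countable, intro conjI ballI)
  fix xs :: "state list"
  have eq: "path n -` {xs} \<inter> space M =
      (if length xs = Suc n then (\<Inter>i\<in>{..n}. Z i -` {xs ! i} \<inter> space M) else {})"
    by (auto simp: path_eq_iff nth_path)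
  have "(\<Inter>i\<in>{..n}. Z i -` {xs ! i} \<inter> space M) \<in> sets M"
    by (intro sets.finite_INT) (auto intro: measurable_sets[OF measurable_Z])
  with eq show "path n -` {xs} \<inter> space M \<in> sets M"
    by (cases "length xs = Suc n") simp_all
qed auto

lemma emeasure_path:
  assumes "length xs = Suc n"
  shows "emeasure M {\<omega>\<in>space M. path n \<omega> = xs} =
           ennreal (if xs ! 0 = s0 then \<Prod>i<n. step K (xs ! i) (xs ! Suc i) else 0)"
  using measure_Z_upto[of n "\<lambda>i. xs ! i"] assms by (simp add: path_eq_iff emeasure_eq_measure)

lemma emeasure_path_next:
  "emeasure M {\<omega>\<in>space M. path n \<omega> = xs \<and> Z (Suc n) \<omega> = t} =
     emeasure M {\<omega>\<in>space M. path n \<omega> = xs} * ennreal (pmf (one_step K (last xs)) t)"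
proof (cases "length xs = Suc n")
  case True
  have last: "last xs = xs ! n"
    using True by (cases xs rule: rev_cases) (auto simp: nth_append)
  have prod: "(\<Prod>i<n. step K ((xs @ [t]) ! i) ((xs @ [t]) ! Suc i)) = (\<Prod>i<n. step K (xs ! i) (xs ! Suc i))"
    using True by (intro prod.cong) (auto simp: nth_append)
  have "{\<omega>\<in>space M. path n \<omega> = xs \<and> Z (Suc n) \<omega> = t} = {\<omega>\<in>space M. path (Suc n) \<omega> = xs @ [t]}"
    by (auto simp: path_Suc)
  also have "emeasure M \<dots> =
      ennreal ((if xs ! 0 = s0 then \<Prod>i<n. step K (xs ! i) (xs ! Suc i) else 0) * step K (xs ! n) t)"
    using True by (simp add: emeasure_path prod nth_append)
  also have "\<dots> = emeasure M {\<omega>\<in>space M. path n \<omega> = xs} * ennreal (step K (xs ! n) t)"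
    using True by (simp add: emeasure_path ennreal_mult' step_def prod_nonneg)
  finally show ?thesis
    by (simp add: last step_eq_pmf_one_step)
next
  case False
  then show ?thesis by (auto simp: path_eq_iff)
qed

lemma measurable_path_next[measurable]:
  "(\<lambda>\<omega>. (path n \<omega>, Z (Suc n) \<omega>)) \<in> measurable M (count_space UNIV)"
  using measurable_Pair[OF measurable_path measurable_Z] by (simp add: pair_measure_countable)

lemma nn_integral_path_next:
  "(\<integral>\<^sup>+\<omega>. g (path n \<omega>) (Z (Suc n) \<omega>) \<partial>M) =
     (\<integral>\<^sup>+\<omega>. \<integral>\<^sup>+t. g (path n \<omega>) t \<partial>one_step K (Z n \<omega>) \<partial>M)"
proof -
  have "(\<integral>\<^sup>+\<omega>. g (path n \<omega>) (Z (Suc n) \<omega>) \<partial>M) =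
      (\<integral>\<^sup>+p. case_prod g p * emeasure M {\<omega>\<in>space M. (path n \<omega>, Z (Suc n) \<omega>) = p} \<partial>count_space UNIV)"
    using nn_integral_countable_rv[of "\<lambda>\<omega>. (path n \<omega>, Z (Suc n) \<omega>)" M "case_prod g"] by simp
  also have "\<dots> = (\<integral>\<^sup>+xs. \<integral>\<^sup>+t. g xs t * emeasure M {\<omega>\<in>space M. path n \<omega> = xs \<and> Z (Suc n) \<omega> = t}
      \<partial>count_space UNIV \<partial>count_space UNIV)"
    by (subst nn_integral_fst_count_space[symmetric]) simp
  also have "\<dots> = (\<integral>\<^sup>+xs. (\<integral>\<^sup>+t. g xs t \<partial>one_step K (last xs)) * emeasure M {\<omega>\<in>space M. path n \<omega> = xs}
      \<partial>count_space UNIV)"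
  proof (intro nn_integral_cong)
    fix xs :: "state list"
    have "(\<integral>\<^sup>+t. g xs t * emeasure M {\<omega>\<in>space M. path n \<omega> = xs \<and> Z (Suc n) \<omega> = t} \<partial>count_space UNIV) =
        (\<integral>\<^sup>+t. ennreal (pmf (one_step K (last xs)) t) * g xs t * emeasure M {\<omega>\<in>space M. path n \<omega> = xs} \<partial>count_space UNIV)"
      by (simp add: emeasure_path_next mult_ac)
    also have "\<dots> = (\<integral>\<^sup>+t. g xs t \<partial>one_step K (last xs)) * emeasure M {\<omega>\<in>space M. path n \<omega> = xs}"
      by (simp add: nn_integral_multc nn_integral_measure_pmf)
    finally show "(\<integral>\<^sup>+t. g xs t * emeasure M {\<omega>\<in>space M. path n \<omega> = xs \<and> Z (Suc n) \<omega> = t} \<partial>count_space UNIV) =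
        (\<integral>\<^sup>+t. g xs t \<partial>one_step K (last xs)) * emeasure M {\<omega>\<in>space M. path n \<omega> = xs}" .
  qed
  also have "\<dots> = (\<integral>\<^sup>+\<omega>. \<integral>\<^sup>+t. g (path n \<omega>) t \<partial>one_step K (last (path n \<omega>)) \<partial>M)"
    by (rule nn_integral_countable_rv[symmetric]) simp
  finally show ?thesis
    by (simp add: last_path)
qed

lemma pred_path[measurable]: "Measurable.pred M (\<lambda>\<omega>. Q (path n \<omega>))"
  by (rule measurable_compose[OF measurable_path]) simp

lemma measurable_fst_Z[measurable]: "(\<lambda>\<omega>. fst (Z n \<omega>)) \<in> measurable M (count_space UNIV)"
  by (rule measurable_compose[OF measurable_Z]) simp

definition avoids :: "int \<Rightarrow> nat \<Rightarrow> 'w \<Rightarrow> bool" where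
  "avoids a n \<omega> \<longleftrightarrow> (\<forall>m\<in>{1..n}. fst (Z m \<omega>) \<noteq> a)"

definition taboo_prob :: "int \<Rightarrow> nat \<Rightarrow> int \<Rightarrow> ennreal" where
  "taboo_prob a n i = emeasure M {\<omega>\<in>space M. avoids a n \<omega> \<and> fst (Z n \<omega>) = i}"

lemma avoids_0[simp]: "avoids a 0 \<omega>"
  by (simp add: avoids_def)

lemma avoids_Suc: "avoids a (Suc n) \<omega> \<longleftrightarrow> avoids a n \<omega> \<and> fst (Z (Suc n) \<omega>) \<noteq> a"
  by (auto simp: avoids_def atLeastAtMostSuc_conv)

lemma avoids_iff_path: "avoids a n \<omega> \<longleftrightarrow> (\<forall>m\<in>{1..n}. fst (path n \<omega> ! m) \<noteq> a)"
  by (simp add: avoids_def nth_path)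

lemma pred_avoids[measurable]: "Measurable.pred M (avoids a n)"
  unfolding avoids_iff_path by measurable

lemma avoids_forever_iff: "(\<forall>n. avoids a n \<omega>) \<longleftrightarrow> (\<forall>n>0. fst (Z n \<omega>) \<noteq> a)"
proof
  assume avoids: "\<forall>n. avoids a n \<omega>"
  show "\<forall>n>0. fst (Z n \<omega>) \<noteq> a"
  proof (intro allI impI)
    fix n :: nat
    assume "0 < n"
    then have "n \<in> {1..n}"
      by simp
    with avoids show "fst (Z n \<omega>) \<noteq> a"
      unfolding avoids_def by blast
  qed
next
  assume "\<forall>n>0. fst (Z n \<omega>) \<noteq> a"
  then show "\<forall>n. avoids a n \<omega>"
    unfolding avoids_def by (metis atLeastAtMost_iff less_eq_Suc_le One_nat_def)
qed

lemma nn_integral_avoids: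
  "(\<integral>\<^sup>+\<omega>. H (fst (Z n \<omega>)) * indicator {\<omega>\<in>space M. avoids a n \<omega>} \<omega> \<partial>M) =
     (\<integral>\<^sup>+i. H i * taboo_prob a n i \<partial>count_space UNIV)"
proof -
  have "(\<integral>\<^sup>+\<omega>. H (fst (Z n \<omega>)) * indicator {\<omega>\<in>space M. avoids a n \<omega>} \<omega> \<partial>M) =
      (\<integral>\<^sup>+\<omega>. \<integral>\<^sup>+i. H i * indicator {\<omega>\<in>space M. avoids a n \<omega> \<and> fst (Z n \<omega>) = i} \<omega>
        \<partial>count_space UNIV \<partial>M)"
  proof (rule nn_integral_cong)
    fix \<omega> assume "\<omega> \<in> space M"
    then have "(\<integral>\<^sup>+i. H i * indicator {\<omega>\<in>space M. avoids a n \<omega> \<and> fst (Z n \<omega>) = i} \<omega> \<partial>count_space UNIV) =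
        (\<integral>\<^sup>+i. (H i * indicator {\<omega>\<in>space M. avoids a n \<omega>} \<omega>) * indicator {fst (Z n \<omega>)} i \<partial>count_space UNIV)"
      by (intro nn_integral_cong) (auto split: split_indicator)
    then show "H (fst (Z n \<omega>)) * indicator {\<omega>\<in>space M. avoids a n \<omega>} \<omega> =
        (\<integral>\<^sup>+i. H i * indicator {\<omega>\<in>space M. avoids a n \<omega> \<and> fst (Z n \<omega>) = i} \<omega> \<partial>count_space UNIV)"
      by simp
  qed
  also have "\<dots> = (\<integral>\<^sup>+i. \<integral>\<^sup>+\<omega>. H i * indicator {\<omega>\<in>space M. avoids a n \<omega> \<and> fst (Z n \<omega>) = i} \<omega>
      \<partial>M \<partial>count_space UNIV)"
    by (rule nn_integral_count_space_nn_integral) measurable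
  also have "\<dots> = (\<integral>\<^sup>+i. H i * taboo_prob a n i \<partial>count_space UNIV)"
    unfolding taboo_prob_def by (intro nn_integral_cong nn_integral_cmult_indicator) measurable
  finally show ?thesis .
qed

lemma taboo_prob_0: "taboo_prob a 0 i = indicator {fst s0} i"
proof -
  have "taboo_prob a 0 i = (\<integral>\<^sup>+\<omega>. indicator {\<omega>\<in>space M. fst (Z 0 \<omega>) = i} \<omega> \<partial>M)"
    unfolding taboo_prob_def by (simp del: nn_integral_indicator) (rule nn_integral_indicator[symmetric], measurable)
  also have "\<dots> = (\<integral>\<^sup>+\<omega>. indicator {i} (fst (Z 0 \<omega>)) \<partial>M)"
    by (intro nn_integral_cong) (simp split: split_indicator)
  also have "\<dots> = (\<integral>\<^sup>+\<omega>. indicator {i} (fst s0) \<partial>M)"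
    using AE_Z_0 by (intro nn_integral_cong_AE) auto
  finally show ?thesis
    by (simp add: emeasure_space_1 split: split_indicator)
qed

lemma measurable_T1[measurable]: "T1 Z k \<in> measurable M (count_space UNIV)"
  unfolding T1_def[abs_def] by measurable

lemma borel_measurable_snd_Z_T1[measurable]: "(\<lambda>\<omega>. real_of_int (snd (Z (T1 Z k \<omega>) \<omega>))) \<in> borel_measurable M"
  by (rule measurable_compose_countable'[where I = UNIV and g = "T1 Z k"]) auto

lemma borel_measurable_snd_incr[measurable]:
  "(\<lambda>\<omega>. g (snd (Z (Suc n) \<omega>) - snd (Z n \<omega>))) \<in> borel_measurable M"
proof -
  have "(\<lambda>\<omega>. g (snd (Z (Suc n) \<omega>) - snd (Z n \<omega>))) =
      (\<lambda>\<omega>. (\<lambda>xs. g (snd (xs ! Suc n) - snd (xs ! n))) (path (Suc n) \<omega>))"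
    by (simp add: nth_path)
  then show ?thesis
    by simp
qed

end

definition fst_kernel :: "(state \<Rightarrow> (int \<times> int) pmf) \<Rightarrow> int \<Rightarrow> int pmf" where
  "fst_kernel K i = map_pmf (\<lambda>d. i + fst d) (K (i, 0))"

text \<open>As \<^const>\<open>ennreal\<close> truncates at \<open>0\<close>, \<^term>\<open>snd_incr_integral K real_of_int i\<close> and
  \<^term>\<open>snd_incr_integral K (\<lambda>y. - real_of_int y) i\<close> are the means of the positive and the
  negative part of the increment of the second coordinate from \<open>(i, 0)\<close>.\<close>

definition snd_incr_integral :: "(state \<Rightarrow> (int \<times> int) pmf) \<Rightarrow> (int \<Rightarrow> real) \<Rightarrow> int \<Rightarrow> ennreal" where
  "snd_incr_integral K h i = (\<integral>\<^sup>+d. ennreal (h (snd d)) \<partial>measure_pmf (K (i, 0)))"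

locale snd_homogeneous_markov_path = markov_path +
  assumes K_fst: "\<And>s. K s = K (fst s, 0)"
begin

lemma emeasure_one_step_fst: "emeasure (measure_pmf (one_step K s)) {t. fst t = j} = pmf (fst_kernel K (fst s)) j"
proof -
  have "emeasure (measure_pmf (one_step K s)) {t. fst t = j} =
      emeasure (measure_pmf (K (fst s, 0))) ((\<lambda>d. fst s + fst d) -` {j})"
    unfolding one_step_def by (subst K_fst) (simp add: vimage_def)
  then show ?thesis
    by (simp add: fst_kernel_def pmf_map measure_pmf.emeasure_eq_measure)
qed

lemma nn_integral_one_step_snd_incr:
  "(\<integral>\<^sup>+t. ennreal (h (snd t - snd s)) \<partial>one_step K s) = snd_incr_integral K h (fst s)"
  unfolding one_step_def snd_incr_integral_def by (simp add: K_fst[of s, symmetric])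

lemma taboo_prob_Suc:
  "taboo_prob a (Suc n) j =
     (if j = a then 0 else \<integral>\<^sup>+i. pmf (fst_kernel K i) j * taboo_prob a n i \<partial>count_space UNIV)"
proof (cases "j = a")
  case True
  then show ?thesis
    by (simp add: taboo_prob_def avoids_Suc)
next
  case False
  define A where "A = {xs :: state list. \<forall>m\<in>{1..n}. fst (xs ! m) \<noteq> a}"
  have avoids_A: "avoids a n \<omega> \<longleftrightarrow> path n \<omega> \<in> A" for \<omega>
    by (simp add: A_def avoids_iff_path)
  have "taboo_prob a (Suc n) j =
      (\<integral>\<^sup>+\<omega>. indicator {\<omega>\<in>space M. avoids a (Suc n) \<omega> \<and> fst (Z (Suc n) \<omega>) = j} \<omega> \<partial>M)"
    unfolding taboo_prob_def by (rule nn_integral_indicator[symmetric]) measurable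
  also have "\<dots> = (\<integral>\<^sup>+\<omega>. indicator A (path n \<omega>) * indicator {t. fst t = j} (Z (Suc n) \<omega>) \<partial>M)"
    using False by (intro nn_integral_cong) (auto simp: avoids_Suc avoids_A split: split_indicator)
  also have "\<dots> = (\<integral>\<^sup>+\<omega>. ennreal (pmf (fst_kernel K (fst (Z n \<omega>))) j) * indicator {\<omega>\<in>space M. avoids a n \<omega>} \<omega> \<partial>M)"
    by (subst nn_integral_path_next, intro nn_integral_cong)
      (auto simp: nn_integral_cmult emeasure_one_step_fst avoids_A split: split_indicator)
  also have "\<dots> = (\<integral>\<^sup>+i. pmf (fst_kernel K i) j * taboo_prob a n i \<partial>count_space UNIV)"
    by (rule nn_integral_avoids)
  finally show ?thesis
    using False by simp
qed

lemma nn_integral_snd_incr_avoids: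
  "(\<integral>\<^sup>+\<omega>. ennreal (h (snd (Z (Suc n) \<omega>) - snd (Z n \<omega>))) * indicator {\<omega>\<in>space M. avoids a n \<omega>} \<omega> \<partial>M) =
     (\<integral>\<^sup>+i. snd_incr_integral K h i * taboo_prob a n i \<partial>count_space UNIV)"
proof -
  define A where "A = {xs :: state list. \<forall>m\<in>{1..n}. fst (xs ! m) \<noteq> a}"
  have "(\<integral>\<^sup>+\<omega>. ennreal (h (snd (Z (Suc n) \<omega>) - snd (Z n \<omega>))) * indicator {\<omega>\<in>space M. avoids a n \<omega>} \<omega> \<partial>M) =
      (\<integral>\<^sup>+\<omega>. indicator A (path n \<omega>) * ennreal (h (snd (Z (Suc n) \<omega>) - snd (last (path n \<omega>)))) \<partial>M)"
    by (intro nn_integral_cong) (simp add: avoids_iff_path A_def last_path split: split_indicator)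
  also have "\<dots> = (\<integral>\<^sup>+\<omega>. snd_incr_integral K h (fst (Z n \<omega>)) * indicator {\<omega>\<in>space M. avoids a n \<omega>} \<omega> \<partial>M)"
    by (subst nn_integral_path_next, intro nn_integral_cong)
      (simp add: nn_integral_cmult nn_integral_one_step_snd_incr last_path avoids_iff_path A_def
        split: split_indicator)
  also have "\<dots> = (\<integral>\<^sup>+i. snd_incr_integral K h i * taboo_prob a n i \<partial>count_space UNIV)"
    by (rule nn_integral_avoids)
  finally show ?thesis .
qed

end

section \<open>The walk \<open>Z\<^sub>1\<close> on \<open>\<nat> \<times> \<int>\<close>\<close>

locale half_plane_walk =
  fixes k0 :: nat and \<mu> :: "(int \<times> int) pmf" and \<mu>'' :: "nat \<Rightarrow> (int \<times> int) pmf"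
    and \<delta> \<gamma> C :: real
  assumes support_\<mu>: "\<And>a b. a < - int k0 \<or> b < - int k0 \<Longrightarrow> pmf \<mu> (a, b) = 0"
    and support_\<mu>'': "\<And>i a b. i < k0 \<Longrightarrow> b < - int k0 \<or> a < - int i \<Longrightarrow> pmf (\<mu>'' i) (a, b) = 0"
    and exp_moment_params: "\<delta> > 0" "\<gamma> > 0" "C > 0"
    and exp_moment: "\<And>i. (\<integral>\<^sup>+d. ennreal (exp (\<delta> * real_of_int (fst d) + \<gamma> * real_of_int (snd d)))
                          \<partial>measure_pmf (K1 k0 \<mu> \<mu>'' (int i, 0))) \<le> ennreal C"
begin

abbreviation K :: "state \<Rightarrow> (int \<times> int) pmf" where
  "K \<equiv> K1 k0 \<mu> \<mu>''"

lemma K_fst: "K s = K (fst s, 0)"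
  by (simp add: K1_def)

lemma support_K:
  assumes "d \<in> set_pmf (K (int i, 0))"
  shows "- int k0 \<le> fst d" "- int k0 \<le> snd d" "0 \<le> int i + fst d"
proof -
  obtain x y where d: "d = (x, y)"
    by (cases d)
  have nz: "pmf (K (int i, 0)) (x, y) \<noteq> 0"
    using assms by (simp add: set_pmf_iff d)
  have "- int k0 \<le> x \<and> - int k0 \<le> y \<and> 0 \<le> int i + x"
  proof (cases "k0 \<le> i")
    case True
    with nz have "\<not> (x < - int k0 \<or> y < - int k0)"
      using support_\<mu>[of x y] by (auto simp: K1_def)
    with True show ?thesis
      by linarith
  next
    case False
    with nz have "\<not> (y < - int k0 \<or> x < - int i)"
      using support_\<mu>''[of i y x] by (auto simp: K1_def)
    with False show ?thesis
      by linarith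
  qed
  then show "- int k0 \<le> fst d" "- int k0 \<le> snd d" "0 \<le> int i + fst d"
    by (auto simp: d)
qed

definition snd_abs_bound :: real where
  "snd_abs_bound = C * (exp (\<delta> * k0) / \<gamma>) + k0"

lemma abs_snd_le_exp_moment:
  assumes "d \<in> set_pmf (K (int i, 0))"
  shows "\<bar>real_of_int (snd d)\<bar> \<le>
           exp (\<delta> * real_of_int (fst d) + \<gamma> * real_of_int (snd d)) * (exp (\<delta> * k0) / \<gamma>) + k0"
proof (cases "snd d \<ge> 0")
  case True
  have "0 \<le> \<delta> * (real_of_int (fst d) + k0)"
    using support_K(1)[OF assms] exp_moment_params by simp
  then have "exp (\<gamma> * real_of_int (snd d)) \<le>
      exp (\<delta> * real_of_int (fst d) + \<gamma> * real_of_int (snd d)) * exp (\<delta> * k0)"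
    by (simp add: exp_add[symmetric] algebra_simps)
  moreover have "\<gamma> * real_of_int (snd d) \<le> exp (\<gamma> * real_of_int (snd d))"
    using exp_ge_add_one_self[of "\<gamma> * real_of_int (snd d)"] by linarith
  ultimately have "real_of_int (snd d) \<le>
      exp (\<delta> * real_of_int (fst d) + \<gamma> * real_of_int (snd d)) * (exp (\<delta> * k0) / \<gamma>)"
    using exp_moment_params by (simp add: field_simps)
  with True show ?thesis
    by simp
next
  case False
  with support_K(2)[OF assms] show ?thesis
    using exp_moment_params by (simp add: add_increasing)
qed

lemma nn_integral_abs_snd_le:
  "(\<integral>\<^sup>+d. ennreal \<bar>real_of_int (snd d)\<bar> \<partial>measure_pmf (K (int i, 0))) \<le> ennreal snd_abs_bound"
proof -
  define c where "c = exp (\<delta> * k0) / \<gamma>"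
  have c_pos: "c > 0"
    using exp_moment_params by (simp add: c_def)
  have "ennreal \<bar>real_of_int (snd d)\<bar> \<le>
      ennreal (exp (\<delta> * real_of_int (fst d) + \<gamma> * real_of_int (snd d))) * ennreal c + ennreal k0"
    if "d \<in> set_pmf (K (int i, 0))" for d
  proof -
    have "ennreal \<bar>real_of_int (snd d)\<bar> \<le>
        ennreal (exp (\<delta> * real_of_int (fst d) + \<gamma> * real_of_int (snd d)) * c + k0)"
      using abs_snd_le_exp_moment[OF that] by (intro ennreal_leI) (simp add: c_def)
    also have "\<dots> = ennreal (exp (\<delta> * real_of_int (fst d) + \<gamma> * real_of_int (snd d))) * ennreal c + ennreal k0"
      using c_pos by (simp add: ennreal_plus ennreal_mult'')
    finally show ?thesis .
  qed
  then have "(\<integral>\<^sup>+d. ennreal \<bar>real_of_int (snd d)\<bar> \<partial>measure_pmf (K (int i, 0))) \<le>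
      (\<integral>\<^sup>+d. ennreal (exp (\<delta> * real_of_int (fst d) + \<gamma> * real_of_int (snd d))) * ennreal c + ennreal k0
        \<partial>measure_pmf (K (int i, 0)))"
    by (intro nn_integral_mono_AE) (simp add: AE_measure_pmf_iff)
  also have "\<dots> = (\<integral>\<^sup>+d. ennreal (exp (\<delta> * real_of_int (fst d) + \<gamma> * real_of_int (snd d)))
      \<partial>measure_pmf (K (int i, 0))) * ennreal c + ennreal k0"
    by (simp add: nn_integral_add nn_integral_multc measure_pmf.emeasure_space_1)
  also have "\<dots> \<le> ennreal C * ennreal c + ennreal k0"
    by (intro add_mono mult_right_mono exp_moment) auto
  also have "\<dots> = ennreal (C * c + k0)"
    using exp_moment_params c_pos by (simp add: ennreal_plus ennreal_mult'')
  also have "\<dots> = ennreal snd_abs_bound"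
    by (simp add: snd_abs_bound_def c_def)
  finally show ?thesis .
qed

lemma snd_incr_integral_le:
  assumes "\<And>y. h y \<le> \<bar>real_of_int y\<bar>"
  shows "snd_incr_integral K h (int i) \<le> ennreal snd_abs_bound"
proof -
  have "snd_incr_integral K h (int i) \<le> (\<integral>\<^sup>+d. ennreal \<bar>real_of_int (snd d)\<bar> \<partial>measure_pmf (K (int i, 0)))"
    unfolding snd_incr_integral_def by (intro nn_integral_mono ennreal_leI assms)
  then show ?thesis
    using nn_integral_abs_snd_le[of i] by order
qed

lemma integrable_snd_K: "integrable (measure_pmf (K (int i, 0))) (\<lambda>d. real_of_int (snd d))"
  using nn_integral_abs_snd_le[of i] by (intro integrableI_bounded) (auto simp: order_le_less_trans)

lemma integrable_one_step_snd: "integrable (measure_pmf (one_step K (int i, 0))) (\<lambda>z. real_of_int (snd z))"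
  using integrable_snd_K[of i] by (simp add: one_step_def)

lemma expectation_one_step_snd:
  "measure_pmf.expectation (one_step K (int i, 0)) (\<lambda>z. real_of_int (snd z)) =
     enn2real (snd_incr_integral K real_of_int (int i)) - enn2real (snd_incr_integral K (\<lambda>y. - real_of_int y) (int i))"
  using real_lebesgue_integral_def[OF integrable_snd_K[of i]]
  by (simp add: one_step_def snd_incr_integral_def)

end

locale stationary_half_plane_walk = half_plane_walk +
  fixes \<pi>1 :: "nat pmf"
  assumes irreducible: "irreducible_on (step (K1 k0 \<mu> \<mu>'')) {s. fst s \<ge> 0}"
    and stationary: "\<And>i'. pmf \<pi>1 i' = (\<Sum>i. pmf \<pi>1 i * pX1 k0 \<mu> \<mu>'' i i')"
begin

lemma pX1_eq_pmf_fst_kernel: "pX1 k0 \<mu> \<mu>'' i i' = pmf (fst_kernel K (int i)) (int i')"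
  by (simp add: pX1_def fst_kernel_def pmf_map vimage_def algebra_simps)

lemma fst_kernel_nonneg: "j \<in> set_pmf (fst_kernel K (int i)) \<Longrightarrow> 0 \<le> j"
  by (auto simp: fst_kernel_def dest: support_K(3))

lemma bind_fst_kernel_stationary: "bind_pmf (map_pmf int \<pi>1) (fst_kernel K) = map_pmf int \<pi>1"
proof (rule pmf_eqI)
  fix j :: int
  show "pmf (bind_pmf (map_pmf int \<pi>1) (fst_kernel K)) j = pmf (map_pmf int \<pi>1) j"
  proof (cases "j \<ge> 0")
    case True
    then obtain m where j: "j = int m"
      by (metis nonneg_eq_int)
    have "ennreal (pmf (bind_pmf (map_pmf int \<pi>1) (fst_kernel K)) j) =
        (\<Sum>n. ennreal (pmf \<pi>1 n * pX1 k0 \<mu> \<mu>'' n m))"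
      unfolding ennreal_pmf_bind nn_integral_map_pmf
      by (simp add: nn_integral_measure_pmf nn_integral_count_space_nat pX1_eq_pmf_fst_kernel j ennreal_mult')
    also have "\<dots> = ennreal (pmf \<pi>1 m)"
      using summable_pmf_nat_mult_bounded[of "\<lambda>n. pX1 k0 \<mu> \<mu>'' n m" 1 \<pi>1]
      by (subst stationary, intro suminf_ennreal2) (auto simp: pX1_def)
    finally show ?thesis
      by (simp add: j pmf_map_inj')
  next
    case False
    then have "j \<notin> set_pmf (bind_pmf (map_pmf int \<pi>1) (fst_kernel K))" "j \<notin> set_pmf (map_pmf int \<pi>1)"
      by (auto dest: fst_kernel_nonneg)
    then show ?thesis
      by (metis set_pmf_iff)
  qed
qed

lemma reaches_fst_kernel:
  assumes "(s, t) \<in> {(x, y). step K x y > 0}\<^sup>*"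
  shows "(fst s, fst t) \<in> {(i, j). j \<in> set_pmf (fst_kernel K i)}\<^sup>*"
  using assms
proof (induction rule: rtrancl_induct)
  case (step t u)
  from step.hyps(2) have "(fst u - fst t, snd u - snd t) \<in> set_pmf (K (fst t, 0))"
    by (simp add: step_def set_pmf_iff K_fst[of t, symmetric])
  then have "fst u \<in> set_pmf (fst_kernel K (fst t))"
    by (force simp: fst_kernel_def)
  with step.IH show ?case
    by (auto intro: rtrancl_into_rtrancl)
qed simp

lemma stationary_kernel_fst_kernel: "stationary_kernel (fst_kernel K) (map_pmf int \<pi>1) (int k)"
proof
  show "bind_pmf (map_pmf int \<pi>1) (fst_kernel K) = map_pmf int \<pi>1"
    by (rule bind_fst_kernel_stationary)
  fix j
  assume "j \<in> set_pmf (map_pmf int \<pi>1)"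
  then have "((j, 0), (int k, 0)) \<in> {(x, y). step K x y > 0}\<^sup>*"
    using irreducible by (auto simp: irreducible_on_def)
  then show "(j, int k) \<in> {(x, y). y \<in> set_pmf (fst_kernel K x)}\<^sup>*"
    using reaches_fst_kernel by fastforce
qed

definition stationary_drift_part :: "(int \<Rightarrow> real) \<Rightarrow> real" where
  "stationary_drift_part h = (\<Sum>n. pmf \<pi>1 n * enn2real (snd_incr_integral K h (int n)))"

lemma enn2real_snd_incr_integral_le:
  assumes "\<And>y. h y \<le> \<bar>real_of_int y\<bar>"
  shows "enn2real (snd_incr_integral K h (int n)) \<le> snd_abs_bound"
  using snd_incr_integral_le[OF assms] exp_moment_params
  by (simp add: enn2real_leI snd_abs_bound_def)

lemma summable_stationary_drift_part:
  assumes "\<And>y. h y \<le> \<bar>real_of_int y\<bar>"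
  shows "summable (\<lambda>n. pmf \<pi>1 n * enn2real (snd_incr_integral K h (int n)))"
  using enn2real_snd_incr_integral_le[OF assms]
  by (intro summable_pmf_nat_mult_bounded[where B = snd_abs_bound]) simp

lemma stationary_drift_part_nonneg: "(\<And>y. h y \<le> \<bar>real_of_int y\<bar>) \<Longrightarrow> 0 \<le> stationary_drift_part h"
  unfolding stationary_drift_part_def by (intro suminf_nonneg summable_stationary_drift_part) auto

lemma nn_integral_snd_incr_integral_stationary:
  assumes "\<And>y. h y \<le> \<bar>real_of_int y\<bar>"
  shows "(\<integral>\<^sup>+j. snd_incr_integral K h j \<partial>map_pmf int \<pi>1) = ennreal (stationary_drift_part h)"
proof -
  have fin: "snd_incr_integral K h (int n) = ennreal (enn2real (snd_incr_integral K h (int n)))" for n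
    using order.strict_trans1[OF snd_incr_integral_le[OF assms, of n]] by simp
  have "(\<integral>\<^sup>+j. snd_incr_integral K h j \<partial>map_pmf int \<pi>1) =
      (\<Sum>n. ennreal (pmf \<pi>1 n * enn2real (snd_incr_integral K h (int n))))"
    unfolding nn_integral_map_pmf
    by (subst fin) (simp add: nn_integral_measure_pmf nn_integral_count_space_nat ennreal_mult')
  also have "\<dots> = ennreal (stationary_drift_part h)"
    unfolding stationary_drift_part_def
    by (intro suminf_ennreal2 summable_stationary_drift_part assms) simp
  finally show ?thesis .
qed

lemma summable_abs_drift:
  "summable (\<lambda>i. \<bar>pmf \<pi>1 i * measure_pmf.expectation (one_step K (int i, 0)) (\<lambda>z. real_of_int (snd z))\<bar>)"
proof -
  have "\<bar>measure_pmf.expectation (one_step K (int i, 0)) (\<lambda>z. real_of_int (snd z))\<bar> \<le> 2 * snd_abs_bound" for i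
    using enn2real_snd_incr_integral_le[OF abs_ge_self, of i]
      enn2real_snd_incr_integral_le[OF abs_ge_minus_self, of i]
      enn2real_nonneg[of "snd_incr_integral K real_of_int (int i)"]
      enn2real_nonneg[of "snd_incr_integral K (\<lambda>y. - real_of_int y) (int i)"]
    unfolding expectation_one_step_snd abs_le_iff by linarith
  then have "summable (\<lambda>i. pmf \<pi>1 i * \<bar>measure_pmf.expectation (one_step K (int i, 0)) (\<lambda>z. real_of_int (snd z))\<bar>)"
    by (intro summable_pmf_nat_mult_bounded) simp
  then show ?thesis
    by (simp add: abs_mult)
qed

lemma suminf_drift:
  "(\<Sum>i. pmf \<pi>1 i * measure_pmf.expectation (one_step K (int i, 0)) (\<lambda>z. real_of_int (snd z))) =
     stationary_drift_part real_of_int - stationary_drift_part (\<lambda>y. - real_of_int y)"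
  unfolding stationary_drift_part_def expectation_one_step_snd right_diff_distrib
  by (intro suminf_diff[symmetric] summable_stationary_drift_part abs_ge_self abs_ge_minus_self)

end

section \<open>Excursions of \<open>Z\<^sub>1\<close> away from the level \<open>k\<close>\<close>

locale half_plane_walk_path = stationary_half_plane_walk +
  fixes k :: nat and l :: int and M :: "'w measure" and Z :: "nat \<Rightarrow> 'w \<Rightarrow> state"
  assumes markov: "markov_process M Z (K1 k0 \<mu> \<mu>'') (int k, l)"
begin

sublocale snd_homogeneous_markov_path M Z K "(int k, l)"
  using markov K_fst by unfold_locales

sublocale cycle: stationary_kernel "fst_kernel K" "map_pmf int \<pi>1" "int k"
  by (rule stationary_kernel_fst_kernel)

lemma taboo_prob_eq_taboo: "taboo_prob (int k) n j = cycle.taboo n j"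
  by (induction n arbitrary: j) (simp_all add: taboo_prob_0 taboo_prob_Suc)

lemma pmf_\<pi>1_pos: "pmf \<pi>1 k > 0"
  using cycle.pmf_ref_pos by (simp add: pmf_map_inj')

lemma nn_integral_expected_visits:
  "ennreal (pmf \<pi>1 k) * (\<integral>\<^sup>+j. H j * (\<Sum>n. taboo_prob (int k) n j) \<partial>count_space UNIV) =
     (\<integral>\<^sup>+j. H j \<partial>measure_pmf (map_pmf int \<pi>1))"
proof -
  have "ennreal (pmf \<pi>1 k) * (\<Sum>n. taboo_prob (int k) n j) = pmf (map_pmf int \<pi>1) j" for j
    using cycle.cycle_formula[of j] by (simp add: taboo_prob_eq_taboo pmf_map_inj')
  then show ?thesis
    by (simp add: nn_integral_cmult[symmetric] nn_integral_measure_pmf mult.left_commute mult.commute)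
qed

lemma kac_formula: "ennreal (pmf \<pi>1 k) * (\<Sum>n. emeasure M {\<omega>\<in>space M. avoids (int k) n \<omega>}) = 1"
proof -
  have "(\<Sum>n. emeasure M {\<omega>\<in>space M. avoids (int k) n \<omega>}) =
      (\<integral>\<^sup>+j. 1 * (\<Sum>n. taboo_prob (int k) n j) \<partial>count_space UNIV)"
    using nn_integral_avoids[of "\<lambda>_. 1"] by (simp add: nn_integral_suminf[symmetric])
  then show ?thesis
    using nn_integral_expected_visits[of "\<lambda>_. 1"] by simp
qed

lemma emeasure_avoids_forever: "emeasure M {\<omega>\<in>space M. \<forall>n. avoids (int k) n \<omega>} = 0"
proof -
  have "(\<Sum>n. emeasure M {\<omega>\<in>space M. avoids (int k) n \<omega>}) \<noteq> \<infinity>"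
  proof
    assume "(\<Sum>n. emeasure M {\<omega>\<in>space M. avoids (int k) n \<omega>}) = \<infinity>"
    with kac_formula pmf_\<pi>1_pos show False
      by (simp add: ennreal_mult_top)
  qed
  then have "(\<lambda>n. emeasure M {\<omega>\<in>space M. avoids (int k) n \<omega>}) \<longlonglongrightarrow> 0"
    by (intro ennreal_tendsto_0_of_suminf_finite) (simp add: less_top)
  moreover have "emeasure M {\<omega>\<in>space M. \<forall>n. avoids (int k) n \<omega>} \<le> emeasure M {\<omega>\<in>space M. avoids (int k) n \<omega>}"
    for n
    by (intro emeasure_mono) auto
  ultimately have "emeasure M {\<omega>\<in>space M. \<forall>n. avoids (int k) n \<omega>} \<le> 0"
    by (intro LIMSEQ_le_const) auto
  then show ?thesis
    by simp
qed

lemma AE_returns: "AE \<omega> in M. \<exists>n>0. fst (Z n \<omega>) = int k"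
proof (rule AE_I')
  show "{\<omega>\<in>space M. \<forall>n. avoids (int k) n \<omega>} \<in> null_sets M"
    using emeasure_avoids_forever by (simp add: null_sets_def) measurable
  show "{\<omega>\<in>space M. \<not> (\<exists>n>0. fst (Z n \<omega>) = int k)} \<subseteq> {\<omega>\<in>space M. \<forall>n. avoids (int k) n \<omega>}"
    using avoids_forever_iff[of "int k"] by blast
qed

lemma avoids_iff_less_T1:
  assumes "\<exists>n>0. fst (Z n \<omega>) = int k"
  shows "avoids (int k) n \<omega> \<longleftrightarrow> n < T1 Z k \<omega>"
proof -
  have pos: "T1 Z k \<omega> > 0" and hit: "fst (Z (T1 Z k \<omega>) \<omega>) = int k"
    unfolding T1_def using LeastI_ex[OF assms] by simp_all
  have before: "fst (Z m \<omega>) \<noteq> int k" if "0 < m" "m < T1 Z k \<omega>" for m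
    using not_less_Least[OF that(2)[unfolded T1_def]] that(1) by simp
  show "avoids (int k) n \<omega> \<longleftrightarrow> n < T1 Z k \<omega>"
  proof
    assume avoids: "avoids (int k) n \<omega>"
    show "n < T1 Z k \<omega>"
    proof (rule ccontr)
      assume "\<not> n < T1 Z k \<omega>"
      with pos have "T1 Z k \<omega> \<in> {1..n}"
        by simp
      with avoids hit show False
        unfolding avoids_def by blast
    qed
  next
    assume "n < T1 Z k \<omega>"
    show "avoids (int k) n \<omega>"
      unfolding avoids_def
    proof
      fix m
      assume "m \<in> {1..n}"
      with \<open>n < T1 Z k \<omega>\<close> show "fst (Z m \<omega>) \<noteq> int k"
        by (intro before) auto
    qed
  qed
qed

definition excursion_incr_sum :: "(int \<Rightarrow> real) \<Rightarrow> 'w \<Rightarrow> ennreal" where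
  "excursion_incr_sum h \<omega> = (\<Sum>n. ennreal (h (snd (Z (Suc n) \<omega>) - snd (Z n \<omega>))) *
     indicator {\<omega>\<in>space M. avoids (int k) n \<omega>} \<omega>)"

lemma borel_measurable_excursion_incr_sum[measurable]: "excursion_incr_sum h \<in> borel_measurable M"
  unfolding excursion_incr_sum_def by measurable

lemma nn_integral_excursion_incr_sum:
  "ennreal (pmf \<pi>1 k) * (\<integral>\<^sup>+\<omega>. excursion_incr_sum h \<omega> \<partial>M) = (\<integral>\<^sup>+j. snd_incr_integral K h j \<partial>measure_pmf (map_pmf int \<pi>1))"
proof -
  have "(\<integral>\<^sup>+\<omega>. excursion_incr_sum h \<omega> \<partial>M) = (\<Sum>n. \<integral>\<^sup>+j. snd_incr_integral K h j * taboo_prob (int k) n j \<partial>count_space UNIV)"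
    unfolding excursion_incr_sum_def by (simp add: nn_integral_suminf nn_integral_snd_incr_avoids)
  also have "\<dots> = (\<integral>\<^sup>+j. snd_incr_integral K h j * (\<Sum>n. taboo_prob (int k) n j) \<partial>count_space UNIV)"
    by (simp add: nn_integral_suminf[symmetric])
  finally show ?thesis
    by (simp add: nn_integral_expected_visits)
qed

lemma excursion_incr_sum_eq_sum:
  assumes "\<exists>n>0. fst (Z n \<omega>) = int k" "\<omega> \<in> space M"
  shows "excursion_incr_sum h \<omega> = (\<Sum>n<T1 Z k \<omega>. ennreal (h (snd (Z (Suc n) \<omega>) - snd (Z n \<omega>))))"
  unfolding excursion_incr_sum_def
  by (subst suminf_finite[of "{..<T1 Z k \<omega>}"]) (auto simp: avoids_iff_less_T1[OF assms(1)] assms(2))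

lemma snd_Z_T1_eq:
  assumes "\<exists>n>0. fst (Z n \<omega>) = int k" "\<omega> \<in> space M" "Z 0 \<omega> = (int k, l)"
  shows "real_of_int (snd (Z (T1 Z k \<omega>) \<omega>)) =
           l + enn2real (excursion_incr_sum real_of_int \<omega>) - enn2real (excursion_incr_sum (\<lambda>y. - real_of_int y) \<omega>)"
proof -
  define D where "D n = real_of_int (snd (Z (Suc n) \<omega>) - snd (Z n \<omega>))" for n
  have "enn2real (excursion_incr_sum real_of_int \<omega>) - enn2real (excursion_incr_sum (\<lambda>y. - real_of_int y) \<omega>) =
      (\<Sum>n<T1 Z k \<omega>. enn2real (ennreal (D n)) - enn2real (ennreal (- D n)))"
    by (simp add: excursion_incr_sum_eq_sum[OF assms(1,2)] enn2real_sum sum_subtractf D_def)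
  also have "\<dots> = (\<Sum>n<T1 Z k \<omega>. D n)"
    by (simp add: enn2real_ennreal_minus_neg)
  also have "\<dots> = real_of_int (snd (Z (T1 Z k \<omega>) \<omega>)) - l"
    using sum_lessThan_telescope[of "\<lambda>n. real_of_int (snd (Z n \<omega>))" "T1 Z k \<omega>"] assms(3)
    by (simp add: D_def)
  finally show ?thesis
    by simp
qed

lemma
  assumes "\<And>y. h y \<le> \<bar>real_of_int y\<bar>"
  shows integrable_excursion_incr_sum: "integrable M (\<lambda>\<omega>. enn2real (excursion_incr_sum h \<omega>))"
    and integral_excursion_incr_sum: "(\<integral>\<omega>. enn2real (excursion_incr_sum h \<omega>) \<partial>M) = stationary_drift_part h / pmf \<pi>1 k"
proof -
  have "ennreal (pmf \<pi>1 k) * (\<integral>\<^sup>+\<omega>. excursion_incr_sum h \<omega> \<partial>M) = ennreal (stationary_drift_part h)"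
    using nn_integral_excursion_incr_sum[of h] nn_integral_snd_incr_integral_stationary[OF assms] by simp
  then have nn: "(\<integral>\<^sup>+\<omega>. excursion_incr_sum h \<omega> \<partial>M) = ennreal (stationary_drift_part h / pmf \<pi>1 k)"
    using pmf_\<pi>1_pos by (rule ennreal_mult_eq_imp_eq_divide)
  then have "AE \<omega> in M. excursion_incr_sum h \<omega> \<noteq> \<infinity>"
    by (intro nn_integral_noteq_infinite) auto
  then have "AE \<omega> in M. ennreal (enn2real (excursion_incr_sum h \<omega>)) = excursion_incr_sum h \<omega>"
    by eventually_elim (simp add: ennreal_enn2real_if)
  then have nn': "(\<integral>\<^sup>+\<omega>. ennreal (enn2real (excursion_incr_sum h \<omega>)) \<partial>M) = ennreal (stationary_drift_part h / pmf \<pi>1 k)"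
    unfolding nn[symmetric] by (rule nn_integral_cong_AE)
  show "integrable M (\<lambda>\<omega>. enn2real (excursion_incr_sum h \<omega>))"
    using nn' by (intro integrableI_bounded) auto
  show "(\<integral>\<omega>. enn2real (excursion_incr_sum h \<omega>) \<partial>M) = stationary_drift_part h / pmf \<pi>1 k"
    using nn' stationary_drift_part_nonneg[OF assms] pmf_\<pi>1_pos by (simp add: integral_eq_nn_integral)
qed

lemma AE_snd_Z_T1_eq:
  "AE \<omega> in M. real_of_int (snd (Z (T1 Z k \<omega>) \<omega>)) =
     l + enn2real (excursion_incr_sum real_of_int \<omega>) - enn2real (excursion_incr_sum (\<lambda>y. - real_of_int y) \<omega>)"
  using AE_returns AE_Z_0 AE_space by eventually_elim (rule snd_Z_T1_eq)

theorem integrable_snd_Z_T1: "integrable M (\<lambda>\<omega>. real_of_int (snd (Z (T1 Z k \<omega>) \<omega>)))"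
proof -
  have "integrable M (\<lambda>\<omega>. real_of_int (snd (Z (T1 Z k \<omega>) \<omega>))) \<longleftrightarrow>
      integrable M (\<lambda>\<omega>. l + enn2real (excursion_incr_sum real_of_int \<omega>) -
        enn2real (excursion_incr_sum (\<lambda>y. - real_of_int y) \<omega>))"
    by (rule integrable_cong_AE[OF _ _ AE_snd_Z_T1_eq]) measurable
  then show ?thesis
    using integrable_excursion_incr_sum[OF abs_ge_self] integrable_excursion_incr_sum[OF abs_ge_minus_self]
    by simp
qed

theorem integral_snd_Z_T1:
  "(\<integral>\<omega>. real_of_int (snd (Z (T1 Z k \<omega>) \<omega>)) \<partial>M) =
     l + (stationary_drift_part real_of_int - stationary_drift_part (\<lambda>y. - real_of_int y)) / pmf \<pi>1 k"
proof -
  have "(\<integral>\<omega>. real_of_int (snd (Z (T1 Z k \<omega>) \<omega>)) \<partial>M) =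
      (\<integral>\<omega>. l + enn2real (excursion_incr_sum real_of_int \<omega>) - enn2real (excursion_incr_sum (\<lambda>y. - real_of_int y) \<omega>) \<partial>M)"
    by (rule integral_cong_AE[OF _ _ AE_snd_Z_T1_eq]) measurable
  also have "\<dots> = l + stationary_drift_part real_of_int / pmf \<pi>1 k - stationary_drift_part (\<lambda>y. - real_of_int y) / pmf \<pi>1 k"
    using integrable_excursion_incr_sum[OF abs_ge_self] integrable_excursion_incr_sum[OF abs_ge_minus_self]
    by (simp add: integral_excursion_incr_sum[OF abs_ge_self] integral_excursion_incr_sum[OF abs_ge_minus_self] prob_space)
  finally show ?thesis
    by (simp add: diff_divide_distrib)
qed

end

theorem lemmaA1:
  fixes k0 :: nat
    and \<mu> :: "(int \<times> int) pmf"
    and \<mu>' \<mu>'' :: "nat \<Rightarrow> (int \<times> int) pmf"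
    and \<mu>ij :: "nat \<Rightarrow> nat \<Rightarrow> (int \<times> int) pmf"
    and \<delta> \<gamma> C :: real
    and \<pi>1 :: "nat pmf"
  assumes k0: "k0 \<ge> 1"
    and A1_mu: "\<And>a b. a < - int k0 \<or> b < - int k0 \<Longrightarrow> pmf \<mu> (a, b) = 0"
    and A1_mu': "\<And>j a b. j < k0 \<Longrightarrow> a < - int k0 \<or> b < - int j \<Longrightarrow> pmf (\<mu>' j) (a, b) = 0"
    and A1_mu'': "\<And>i a b. i < k0 \<Longrightarrow> b < - int k0 \<or> a < - int i \<Longrightarrow> pmf (\<mu>'' i) (a, b) = 0"
    and A1_muij: "\<And>i j a b. i < k0 \<Longrightarrow> j < k0 \<Longrightarrow> a < - int i \<or> b < - int j \<Longrightarrow> pmf (\<mu>ij i j) (a, b) = 0"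
    and A2: "\<delta> > 0" "\<gamma> > 0" "C > 0"
      "\<And>i j. (\<integral>\<^sup>+ d. ennreal (exp (\<delta> * real_of_int (fst d) + \<gamma> * real_of_int (snd d)))
                 \<partial>measure_pmf (KZ k0 \<mu> \<mu>' \<mu>'' \<mu>ij (int i, int j))) \<le> ennreal C"
    and A3: "irreducible_on (step (K0 \<mu>)) UNIV"
      "irreducible_on (step (K1 k0 \<mu> \<mu>'')) {s. fst s \<ge> 0}"
      "irreducible_on (step (K2 k0 \<mu> \<mu>')) {s. snd s \<ge> 0}"
      "irreducible_on (step (KZ k0 \<mu> \<mu>' \<mu>'' \<mu>ij)) {s. fst s \<ge> 0 \<and> snd s \<ge> 0}"
    and m1: "measure_pmf.expectation \<mu> (\<lambda>d. real_of_int (fst d)) < 0"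
    and pi1_inv: "\<And>i'. pmf \<pi>1 i' = (\<Sum>i. pmf \<pi>1 i * pX1 k0 \<mu> \<mu>'' i i')"
  shows "(\<forall>i. integrable (measure_pmf (one_step (K1 k0 \<mu> \<mu>'') (int i, 0)))
                         (\<lambda>z. real_of_int (snd z)))
       \<and> summable (\<lambda>i. \<bar>pmf \<pi>1 i * measure_pmf.expectation
                         (one_step (K1 k0 \<mu> \<mu>'') (int i, 0)) (\<lambda>z. real_of_int (snd z))\<bar>)
       \<and> (\<forall>(k::nat) (l::int) (M::'w measure) (Z::nat \<Rightarrow> 'w \<Rightarrow> state).
            markov_process M Z (K1 k0 \<mu> \<mu>'') (int k, l) \<longrightarrow>
              (AE \<omega> in M. \<exists>n>0. fst (Z n \<omega>) = int k)
            \<and> integrable M (\<lambda>\<omega>. real_of_int (snd (Z (T1 Z k \<omega>) \<omega>)))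
            \<and> (\<integral>\<omega>. real_of_int (snd (Z (T1 Z k \<omega>) \<omega>)) \<partial>M)
                = real_of_int l +
                  (\<Sum>i. pmf \<pi>1 i * measure_pmf.expectation
                         (one_step (K1 k0 \<mu> \<mu>'') (int i, 0)) (\<lambda>z. real_of_int (snd z)))
                  / pmf \<pi>1 k)"
proof (intro conjI allI impI)
  \<comment> \<open>Only \<open>A1_mu\<close>, \<open>A1_mu''\<close>, \<open>A2\<close> on the line \<open>j = k0\<close>, \<open>A3(2)\<close> and \<open>pi1_inv\<close> are used:
    the other hypotheses concern \<open>Z\<close>, \<open>Z\<^sub>0\<close>, \<open>Z\<^sub>2\<close>, and \<open>m\<^sub>1 < 0\<close> enters only through the
    existence of the invariant law \<open>\<pi>1\<close>.\<close>
  have KZ_eq_K1: "KZ k0 \<mu> \<mu>' \<mu>'' \<mu>ij (int i, int k0) = K1 k0 \<mu> \<mu>'' (int i, 0)" for i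
    by (simp add: KZ_def K1_def)
  have exp_moment: "(\<integral>\<^sup>+d. ennreal (exp (\<delta> * real_of_int (fst d) + \<gamma> * real_of_int (snd d)))
      \<partial>measure_pmf (K1 k0 \<mu> \<mu>'' (int i, 0))) \<le> ennreal C" for i
    using A2(4)[of i k0] by (simp only: KZ_eq_K1)
  interpret stationary_half_plane_walk k0 \<mu> \<mu>'' \<delta> \<gamma> C \<pi>1
    by unfold_locales (fact A1_mu A1_mu'' A2(1-3) exp_moment A3(2) pi1_inv)+
  show "integrable (measure_pmf (one_step (K1 k0 \<mu> \<mu>'') (int i, 0))) (\<lambda>z. real_of_int (snd z))" for i
    by (rule integrable_one_step_snd)
  show "summable (\<lambda>i. \<bar>pmf \<pi>1 i * measure_pmf.expectation (one_step (K1 k0 \<mu> \<mu>'') (int i, 0))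
      (\<lambda>z. real_of_int (snd z))\<bar>)"
    by (rule summable_abs_drift)
  fix k l and M :: "'w measure" and Z
  assume "markov_process M Z (K1 k0 \<mu> \<mu>'') (int k, l)"
  then interpret half_plane_walk_path k0 \<mu> \<mu>'' \<delta> \<gamma> C \<pi>1 k l M Z
    by unfold_locales
  show "AE \<omega> in M. \<exists>n>0. fst (Z n \<omega>) = int k"
    by (rule AE_returns)
  show "integrable M (\<lambda>\<omega>. real_of_int (snd (Z (T1 Z k \<omega>) \<omega>)))"
    by (rule integrable_snd_Z_T1)
  show "(\<integral>\<omega>. real_of_int (snd (Z (T1 Z k \<omega>) \<omega>)) \<partial>M) = real_of_int l +
      (\<Sum>i. pmf \<pi>1 i * measure_pmf.expectation (one_step (K1 k0 \<mu> \<mu>'') (int i, 0))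
        (\<lambda>z. real_of_int (snd z))) / pmf \<pi>1 k"
    by (simp add: integral_snd_Z_T1 suminf_drift)
qed

end
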